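(* Let $\mathbf P=UV^\top$ be an ergodic transition matrix on $\{1,\dots,p\}$ with stationary distribution $\pi$, where $U,V\in\mathbb R^{p\times r}$ are entrywise nonnegative with $U\mathbf 1_r=\mathbf 1_p$, $V^\top\mathbf 1_p=\mathbf 1_r$. Suppose there are constants $c_1,C_1,c_2>0$ with $c_1p^{-1}\le\pi_j\le C_1p^{-1}$ for all $j$, $\lambda_{\min}(U^\top[\mathrm{diag}(\pi)]^2U)\ge c_2p^{-1}r^{-1}$ and $\lambda_{\min}(V^\top[\mathrm{diag}(\pi)]^{-1}V)\ge c_2r$. Let $\mathbf Q=\mathrm{diag}(\pi)\mathbf P[\mathrm{diag}(\pi)]^{-1/2}$ have compact singular value decomposition $\mathbf Q=\mathbf G\Sigma\mathbf H^\top$ with $\mathbf G,\mathbf H\in\mathbb R^{p\times r}$ having orthonormal columns and $\Sigma\in\mathbb R^{r\times r}$ diagonal positive. Then for every $j=1,\dots,p$, $$\|\mathbf e_j^\top\mathbf G\|_2\le c_2^{-1/2}\pi_j\sqrt{pr},\qquad \|\mathbf e_j^\top\mathbf H\|_2\le C_1c_2^{-3/2}\sqrt{\pi_jr}.$$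
   Context: $\mathbf e_j$ denotes the $j$-th standard basis vector of $\mathbb R^p$. *)

theory Defs
  imports "HOL-Analysis.Analysis"
begin

primrec mpow :: "real^'n^'n \<Rightarrow> nat \<Rightarrow> real^'n^'n" where
  "mpow A 0 = mat 1"
| "mpow A (Suc k) = A ** mpow A k"

definition stochastic :: "real^'n^'n \<Rightarrow> bool" where
  "stochastic P \<longleftrightarrow> (\<forall>i j. P $ i $ j \<ge> 0) \<and> (\<forall>i. (\<Sum>j\<in>UNIV. P $ i $ j) = 1)"

definition irreducible_chain :: "real^'n^'n \<Rightarrow> bool" where
  "irreducible_chain P \<longleftrightarrow> (\<forall>i j. \<exists>k. mpow P k $ i $ j > 0)"

definition aperiodic_chain :: "real^'n^'n \<Rightarrow> bool" where
  "aperiodic_chain P \<longleftrightarrow> (\<forall>i. Gcd {k. k > 0 \<and> mpow P k $ i $ i > 0} = 1)"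

definition ergodic :: "real^'n^'n \<Rightarrow> bool" where
  "ergodic P \<longleftrightarrow> stochastic P \<and> irreducible_chain P \<and> aperiodic_chain P"

definition stationary_dist :: "real^'n^'n \<Rightarrow> real^'n \<Rightarrow> bool" where
  "stationary_dist P \<pi> \<longleftrightarrow> (\<forall>j. \<pi> $ j \<ge> 0) \<and> (\<Sum>j\<in>UNIV. \<pi> $ j) = 1 \<and> \<pi> v* P = \<pi>"

definition diag_mat :: "real^'n \<Rightarrow> real^'n^'n" where
  "diag_mat d = (\<chi> i j. if i = j then d $ i else 0)"

definition lambda_min :: "real^'n^'n \<Rightarrow> real" where
  "lambda_min A = Min {l. \<exists>v. v \<noteq> 0 \<and> A *v v = l *s v}"

end

theory Submission
  imports Defs
begin

(* With D = diag pi, the compact SVD Q = G Sigma H^T gives G = Q H Sigma^-1 = D U A and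
   H = Q^T G Sigma^-1 = D^(-1/2) V B for some r x r matrices A, B.  Orthonormality of the columns
   of G means A^T (U^T D^2 U) A = I, hence |A^T x| <= |x| / sqrt (lambda_min (U^T D^2 U)); as row j
   of G is pi_j A^T U_j and |U_j| <= 1 for a row-stochastic U, this is the bound on G.  The same
   argument bounds row j of H by pi_j^(-1/2) |V_j| / sqrt (lambda_min (V^T D^-1 V)).  Finally
   |V_j| <= sum_k V_jk is controlled by stationarity, pi_j = sum_k (pi^T U)_k V_jk, together with
   (pi^T U)_k >= c2 / (C1 r), which follows by comparing lambda_min (U^T D^2 U) with the k-th
   diagonal entry sum_i pi_i^2 U_ik^2 <= (C1 / p) (pi^T U)_k. *)

lemma transpose_diag_mat [simp]: "transpose (diag_mat d) = diag_mat d"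
  by (simp add: vec_eq_iff diag_mat_def transpose_def)

lemma diag_mat_mult_diag_mat: "diag_mat a ** diag_mat b = diag_mat (\<chi> i. a $ i * b $ i)"
  by (simp add: vec_eq_iff diag_mat_def matrix_matrix_mult_def if_distrib[of "\<lambda>x. x * _"] cong: if_cong)

lemma row_diag_mat_mult: "(diag_mat d ** X) $ i = d $ i *s X $ i"
  by (simp add: vec_eq_iff diag_mat_def matrix_matrix_mult_def if_distrib[of "\<lambda>x. x * _"] cong: if_cong)

lemma row_matrix_mult: "(X ** Y) $ i = X $ i v* Y"
  by (simp add: vec_eq_iff vector_matrix_mult_def matrix_matrix_mult_def)

lemma axis_vector_matrix_mult: "axis i 1 v* (X :: real^'n^'m) = X $ i"
  by (simp add: vec_eq_iff vector_matrix_mult_def axis_def if_distrib[of "\<lambda>x. x * _"] cong: if_cong)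

lemma gram_diag_mat_mult:
  "transpose (diag_mat d ** X) ** (diag_mat d ** X) = transpose X ** (diag_mat d ** diag_mat d) ** X"
  by (simp add: matrix_transpose_mul matrix_mul_assoc)

lemma positive_diagonal_symmetric_inverse:
  fixes S :: "real^'n^'n"
  assumes off_diag: "\<forall>k l. k \<noteq> l \<longrightarrow> S $ k $ l = 0" and diag_pos: "\<forall>k. 0 < S $ k $ k"
  shows "transpose S = S" and "S ** diag_mat (\<chi> k. inverse (S $ k $ k)) = mat 1"
proof -
  have S_eq: "S = diag_mat (\<chi> k. S $ k $ k)"
    using off_diag by (auto simp: vec_eq_iff diag_mat_def)
  then show "transpose S = S"
    by (metis transpose_diag_mat)
  have "S $ k $ k \<noteq> 0" for k
    using diag_pos by (simp add: less_imp_neq[symmetric])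
  then show "S ** diag_mat (\<chi> k. inverse (S $ k $ k)) = mat 1"
    by (subst (1) S_eq, simp add: diag_mat_mult_diag_mat, simp add: vec_eq_iff diag_mat_def mat_def)
qed

lemma inner_matrix_vector_symmetric:
  fixes M :: "real^'n^'n"
  assumes "transpose M = M"
  shows "x \<bullet> (M *v y) = (M *v x) \<bullet> y"
  by (metis assms dot_lmul_matrix transpose_matrix_vector)

lemma finite_eigenvalues_symmetric:
  fixes M :: "real^'n^'n"
  assumes sym: "transpose M = M"
  shows "finite {l. \<exists>v. v \<noteq> 0 \<and> M *v v = l *s v}"
proof -
  let ?E = "{l. \<exists>v. v \<noteq> 0 \<and> M *v v = l *s v}"
  define w where "w l = (SOME v. v \<noteq> 0 \<and> M *v v = l *\<^sub>R v)" for l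
  have w: "w l \<noteq> 0 \<and> M *v w l = l *\<^sub>R w l" if "l \<in> ?E" for l
    using that unfolding w_def scalar_mult_eq_scaleR mem_Collect_eq by (rule someI_ex)
  have orth: "w l \<bullet> w m = 0" if "l \<in> ?E" "m \<in> ?E" "l \<noteq> m" for l m
  proof -
    have "l * (w l \<bullet> w m) = w l \<bullet> (M *v w m)"
      using w[OF that(1)] inner_matrix_vector_symmetric[OF sym, of "w l" "w m"] by simp
    also have "\<dots> = m * (w l \<bullet> w m)"
      using w[OF that(2)] by simp
    finally show ?thesis using that(3) by simp
  qed
  have inj: "inj_on w ?E"
  proof (rule inj_onI)
    fix l m assume "l \<in> ?E" "m \<in> ?E" "w l = w m"
    then show "l = m"
      using orth[of l m] w[of l] by auto
  qed
  have "finite ?E \<and> card ?E \<le> DIM(real^'n)"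
  proof (rule finite_if_finite_subsets_card_bdd)
    fix F assume F: "F \<subseteq> ?E" "finite F"
    have "pairwise orthogonal (w ` F)"
      using F(1) orth unfolding pairwise_def orthogonal_def by blast
    moreover have "0 \<notin> w ` F"
      using F(1) w by fastforce
    ultimately have "independent (w ` F)"
      by (rule pairwise_orthogonal_independent)
    then have "card (w ` F) \<le> DIM(real^'n)"
      using independent_bound by blast
    then show "card F \<le> DIM(real^'n)"
      by (simp add: card_image inj_on_subset[OF inj F(1)])
  qed
  then show ?thesis ..
qed

lemma nonneg_quadratic_imp_linear_coeff_zero:
  fixes a b :: real
  assumes nonneg: "\<And>t. 0 \<le> 2 * t * a + t\<^sup>2 * b"
  shows "a = 0"
proof (rule ccontr)
  assume "a \<noteq> 0"
  define c where "c = \<bar>b\<bar> + 1"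
  have c: "c > 0" "\<bar>b\<bar> \<le> c" by (simp_all add: c_def)
  have "0 \<le> 2 * (- a / c) * a + (- a / c)\<^sup>2 * b" by (rule nonneg)
  also have "\<dots> \<le> a\<^sup>2 * (\<bar>b\<bar> - 2 * c) / c\<^sup>2"
    using c mult_left_mono[OF abs_ge_self[of b], of "a * a"] by (simp add: field_simps power2_eq_square)
  also have "\<dots> < 0"
    using c \<open>a \<noteq> 0\<close> by (intro divide_neg_pos mult_pos_neg) auto
  finally show False by simp
qed

lemma eigenvector_if_Rayleigh_minimum:
  fixes M :: "real^'n^'n"
  assumes sym: "transpose M = M"
    and lower: "\<And>y. \<mu> * (y \<bullet> y) \<le> y \<bullet> (M *v y)"
    and attained: "x \<bullet> (M *v x) = \<mu> * (x \<bullet> x)"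
  shows "M *v x = \<mu> *s x"
proof -
  define g where "g = M *v x - \<mu> *\<^sub>R x"
  have "0 \<le> 2 * t * (g \<bullet> g) + t\<^sup>2 * (g \<bullet> (M *v g) - \<mu> * (g \<bullet> g))" for t
  proof -
    have "0 \<le> (x + t *\<^sub>R g) \<bullet> (M *v (x + t *\<^sub>R g)) - \<mu> * ((x + t *\<^sub>R g) \<bullet> (x + t *\<^sub>R g))"
      using lower by simp
    also have "\<dots> = 2 * t * (g \<bullet> g) + t\<^sup>2 * (g \<bullet> (M *v g) - \<mu> * (g \<bullet> g))"
      using attained inner_matrix_vector_symmetric[OF sym, of x g]
      by (simp add: g_def algebra_simps inner_commute power2_eq_square)
    finally show ?thesis .
  qed
  then have "g \<bullet> g = 0"
    by (rule nonneg_quadratic_imp_linear_coeff_zero)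
  then show ?thesis
    by (simp add: g_def scalar_mult_eq_scaleR)
qed

lemma lambda_min_mult_inner_le:
  fixes M :: "real^'n^'n"
  assumes sym: "transpose M = M"
  shows "lambda_min M * (x \<bullet> x) \<le> x \<bullet> (M *v x)"
proof -
  \<comment> \<open>The minimum of the quadratic form on the unit sphere is an eigenvalue, hence at least lambda_min.\<close>
  define f where "f y = y \<bullet> (M *v y)" for y
  have "continuous_on (sphere 0 1) f"
    unfolding f_def by (intro continuous_intros linear_continuous_on matrix_vector_mul_bounded_linear)
  moreover have "sphere (0::real^'n) 1 \<noteq> {}"
    using norm_axis_1 by fastforce
  ultimately obtain x0 where x0: "x0 \<in> sphere 0 1" and min: "\<And>y. y \<in> sphere 0 1 \<Longrightarrow> f x0 \<le> f y"
    using continuous_attains_inf[OF compact_sphere] by blast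
  have lower: "f x0 * (y \<bullet> y) \<le> f y" for y
  proof (cases "y = 0")
    case False
    have "f x0 \<le> f (inverse (norm y) *\<^sub>R y)"
      using False by (intro min) simp
    also have "\<dots> = f y / (y \<bullet> y)"
      by (simp add: f_def matrix_vector_mult_scaleR dot_square_norm divide_inverse power2_eq_square)
    finally show ?thesis
      using False by (simp add: pos_le_divide_eq)
  qed (simp add: f_def)
  have "x0 \<bullet> x0 = 1"
    using x0 by (simp add: dot_square_norm)
  then have "M *v x0 = f x0 *s x0"
    by (intro eigenvector_if_Rayleigh_minimum[OF sym]) (simp_all add: lower[unfolded f_def] f_def)
  moreover have "x0 \<noteq> 0"
    using x0 by auto
  ultimately have "f x0 \<in> {l. \<exists>v. v \<noteq> 0 \<and> M *v v = l *s v}"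
    by blast
  then have "lambda_min M \<le> f x0"
    unfolding lambda_min_def using finite_eigenvalues_symmetric[OF sym] by (rule Min_le[rotated])
  then have "lambda_min M * (x \<bullet> x) \<le> f x0 * (x \<bullet> x)"
    by (rule mult_right_mono) simp
  also have "\<dots> \<le> x \<bullet> (M *v x)"
    using lower unfolding f_def .
  finally show ?thesis .
qed

lemma lambda_min_le_diag_entry:
  fixes M :: "real^'n^'n"
  assumes "transpose M = M"
  shows "lambda_min M \<le> M $ k $ k"
  using lambda_min_mult_inner_le[OF assms, of "axis k 1"]
  by (simp add: inner_axis_axis inner_axis' matrix_vector_mul_component inner_axis)

lemma factor_of_compact_svd:
  assumes Q_eq: "Q = G ** S ** transpose H" and H_orth: "transpose H ** H = mat 1"
    and S_inv: "S ** S' = mat 1"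
  shows "G = Q ** H ** S'"
proof -
  have "Q ** H ** S' = G ** S ** (transpose H ** H) ** S'"
    by (simp add: Q_eq matrix_mul_assoc)
  also have "\<dots> = G"
    by (simp add: H_orth S_inv flip: matrix_mul_assoc)
  finally show ?thesis ..
qed

lemma norm_row_le_of_orthonormal_factorization:
  fixes X :: "real^'r^'p" and Y :: "real^'k^'p" and A :: "real^'r^'k"
  assumes X_eq: "X = Y ** A" and X_orth: "transpose X ** X = mat 1"
    and m_pos: "0 < m" and m_le: "m \<le> lambda_min (transpose Y ** Y)"
  shows "norm (X $ j) \<le> norm (Y $ j) / sqrt m"
proof -
  have Y_lower: "m * (y \<bullet> y) \<le> (Y *v y) \<bullet> (Y *v y)" for y
  proof -
    have "m * (y \<bullet> y) \<le> lambda_min (transpose Y ** Y) * (y \<bullet> y)"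
      using m_le by (rule mult_right_mono) simp
    also have "\<dots> \<le> y \<bullet> ((transpose Y ** Y) *v y)"
      by (rule lambda_min_mult_inner_le) (simp add: matrix_transpose_mul)
    also have "\<dots> = (Y *v y) \<bullet> (Y *v y)"
      by (metis dot_lmul_matrix inner_commute matrix_vector_mul_assoc transpose_matrix_vector)
    finally show ?thesis .
  qed
  have A_bound: "sqrt m * norm (A *v x) \<le> norm x" for x
  proof -
    have "(X *v x) \<bullet> (X *v x) = x \<bullet> x"
      by (metis X_orth dot_lmul_matrix matrix_vector_mul_assoc matrix_vector_mul_lid transpose_matrix_vector)
    then have "m * (norm (A *v x))\<^sup>2 \<le> (norm x)\<^sup>2"
      using Y_lower[of "A *v x"] by (simp add: X_eq matrix_vector_mul_assoc dot_square_norm)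
    then have "(sqrt m * norm (A *v x))\<^sup>2 \<le> (norm x)\<^sup>2"
      using m_pos by (simp add: power_mult_distrib)
    then show ?thesis
      by (rule power2_le_imp_le) simp
  qed
  define u z where "u = Y $ j" and "z = u v* A"
  have "sqrt m * (norm z)\<^sup>2 = sqrt m * (u \<bullet> (A *v z))"
    by (simp add: z_def dot_square_norm flip: dot_lmul_matrix)
  also have "\<dots> \<le> norm u * (sqrt m * norm (A *v z))"
    using m_pos norm_cauchy_schwarz[of u "A *v z"] by (simp add: mult.left_commute)
  also have "\<dots> \<le> norm u * norm z"
    using A_bound by (simp add: mult_left_mono)
  finally have "sqrt m * norm z \<le> norm u"
    by (cases "z = 0") (simp_all add: power2_eq_square)
  then show ?thesis
    using m_pos by (simp add: X_eq row_matrix_mult u_def z_def field_simps)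
qed

lemma norm_row_diag_factor_le:
  fixes X :: "real^'r^'p" and Y :: "real^'k^'p" and A :: "real^'r^'k"
  assumes X_eq: "X = (diag_mat d ** Y) ** A" and X_orth: "transpose X ** X = mat 1"
    and m_pos: "0 < m" and m_le: "m \<le> lambda_min (transpose Y ** (diag_mat d ** diag_mat d) ** Y)"
  shows "norm (X $ j) \<le> \<bar>d $ j\<bar> * norm (Y $ j) / sqrt m"
  using norm_row_le_of_orthonormal_factorization[OF X_eq X_orth m_pos] m_le
  by (simp add: gram_diag_mat_mult row_diag_mat_mult scalar_mult_eq_scaleR)

lemma norm_row_le_one_if_row_stochastic:
  fixes U :: "real^'r^'p"
  assumes U_nonneg: "\<forall>i k. 0 \<le> U $ i $ k" and U_rows: "U *v (\<chi> k. 1) = (\<chi> i. 1)"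
  shows "norm (U $ i) \<le> 1"
proof -
  have "(\<Sum>k\<in>UNIV. U $ i $ k) = 1"
    using arg_cong[OF U_rows, of "\<lambda>v. v $ i"] by (simp add: matrix_vector_mult_def)
  then show ?thesis
    using norm_le_l1_cart[of "U $ i"] U_nonneg by simp
qed

lemma lambda_min_le_weighted_column_sum:
  fixes U :: "real^'r^'p" and \<pi> :: "real^'p"
  assumes U_nonneg: "\<forall>i k. 0 \<le> U $ i $ k" and U_rows: "U *v (\<chi> k. 1) = (\<chi> i. 1)"
    and \<pi>_bounds: "\<And>i. 0 \<le> \<pi> $ i \<and> \<pi> $ i \<le> b"
  shows "lambda_min (transpose U ** (diag_mat \<pi> ** diag_mat \<pi>) ** U) \<le> b * (\<pi> v* U) $ k"
proof -
  let ?M = "transpose U ** (diag_mat \<pi> ** diag_mat \<pi>) ** U"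
  have weight_le: "\<pi> $ i * U $ i $ k \<le> b" for i
  proof -
    have "U $ i $ k \<le> 1"
      using component_le_norm_cart[of "U $ i" k] norm_row_le_one_if_row_stochastic[OF U_nonneg U_rows, of i]
      by linarith
    then have "\<pi> $ i * U $ i $ k \<le> \<pi> $ i"
      using \<pi>_bounds[of i] by (simp add: mult_left_le)
    then show ?thesis
      using \<pi>_bounds[of i] by linarith
  qed
  have "lambda_min ?M \<le> ?M $ k $ k"
    by (rule lambda_min_le_diag_entry) (simp add: matrix_transpose_mul matrix_mul_assoc)
  also have "?M $ k $ k = (\<Sum>i\<in>UNIV. ((diag_mat \<pi> ** U) $ i $ k)\<^sup>2)"
    unfolding gram_diag_mat_mult[symmetric]
    by (simp add: matrix_mult_transpose_dot_column inner_vec_def column_def power2_eq_square)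
  also have "\<dots> = (\<Sum>i\<in>UNIV. (\<pi> $ i * U $ i $ k)\<^sup>2)"
    by (simp add: row_diag_mat_mult)
  also have "\<dots> \<le> (\<Sum>i\<in>UNIV. b * (\<pi> $ i * U $ i $ k))"
    using weight_le \<pi>_bounds U_nonneg by (intro sum_mono) (simp add: power2_eq_square mult_right_mono)
  also have "\<dots> = b * (\<pi> v* U) $ k"
    by (simp add: vector_matrix_mult_def sum_distrib_left)
  finally show ?thesis .
qed

lemma norm_row_le_stationary:
  fixes U V :: "real^'r^'p" and \<pi> :: "real^'p"
  assumes stat: "\<pi> v* (U ** transpose V) = \<pi>" and V_nonneg: "\<forall>j k. 0 \<le> V $ j $ k"
    and m_nonneg: "0 \<le> m" and m_le: "\<And>k. m \<le> b * (\<pi> v* U) $ k"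
  shows "m * norm (V $ j) \<le> b * \<pi> $ j"
proof -
  have "m * norm (V $ j) \<le> m * (\<Sum>k\<in>UNIV. V $ j $ k)"
    using norm_le_l1_cart[of "V $ j"] V_nonneg m_nonneg by (simp add: mult_left_mono)
  also have "\<dots> \<le> (\<Sum>k\<in>UNIV. b * (\<pi> v* U) $ k * V $ j $ k)"
    unfolding sum_distrib_left using m_le V_nonneg by (intro sum_mono mult_right_mono) auto
  also have "\<dots> = b * ((\<pi> v* U) v* transpose V) $ j"
    unfolding vector_matrix_mult_def[of "\<pi> v* U"] transpose_def
    by (simp add: sum_distrib_left mult_ac)
  also have "\<dots> = b * \<pi> $ j"
    by (simp only: vector_matrix_mul_assoc stat)
  finally show ?thesis .
qed

theorem mainTheorem7:
  fixes U V :: "real^'r^'p" and \<pi> :: "real^'p"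
    and G H :: "real^'r^'p" and \<Sigma> :: "real^'r^'r"
    and c1 C1 c2 :: real
  assumes U_nonneg: "\<forall>i k. U $ i $ k \<ge> 0"
    and V_nonneg: "\<forall>i k. V $ i $ k \<ge> 0"
    and U_rows: "U *v (\<chi> k. 1) = (\<chi> i. 1)"
    and V_cols: "transpose V *v (\<chi> i. 1) = (\<chi> k. 1)"
    and erg: "ergodic (U ** transpose V)"
    and stat: "stationary_dist (U ** transpose V) \<pi>"
    and c1_pos: "c1 > 0" and C1_pos: "C1 > 0" and c2_pos: "c2 > 0"
    and pi_bounds: "\<forall>j. c1 / real CARD('p) \<le> \<pi> $ j \<and> \<pi> $ j \<le> C1 / real CARD('p)"
    and eigU: "lambda_min (transpose U ** (diag_mat \<pi> ** diag_mat \<pi>) ** U)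
                 \<ge> c2 / (real CARD('p) * real CARD('r))"
    and eigV: "lambda_min (transpose V ** diag_mat (\<chi> j. inverse (\<pi> $ j)) ** V)
                 \<ge> c2 * real CARD('r)"
    and G_orth: "transpose G ** G = mat 1"
    and H_orth: "transpose H ** H = mat 1"
    and Sigma_diag: "\<forall>k l. k \<noteq> l \<longrightarrow> \<Sigma> $ k $ l = 0"
    and Sigma_pos: "\<forall>k. \<Sigma> $ k $ k > 0"
    and svd: "diag_mat \<pi> ** (U ** transpose V) ** diag_mat (\<chi> j. inverse (sqrt (\<pi> $ j)))
              = G ** \<Sigma> ** transpose H"
  shows "\<forall>j. norm (axis j 1 v* G) \<le> c2 powr (-1/2) * \<pi> $ j * sqrt (real CARD('p) * real CARD('r))
           \<and> norm (axis j 1 v* H) \<le> C1 * c2 powr (-3/2) * sqrt (\<pi> $ j * real CARD('r))"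
proof -
  let ?p = "real CARD('p)" and ?r = "real CARD('r)"
  define D Dh \<Sigma>' where "D = diag_mat \<pi>" and "Dh = diag_mat (\<chi> j. inverse (sqrt (\<pi> $ j)))"
    and "\<Sigma>' = diag_mat (\<chi> k. inverse (\<Sigma> $ k $ k))"
  have pi_pos: "0 < \<pi> $ j" for j
    using pi_bounds c1_pos by (meson divide_pos_pos less_le_trans of_nat_0_less_iff zero_less_card_finite)
  note \<Sigma>_sym = positive_diagonal_symmetric_inverse(1)[OF Sigma_diag Sigma_pos]
  have \<Sigma>_inv: "\<Sigma> ** \<Sigma>' = mat 1"
    unfolding \<Sigma>'_def by (rule positive_diagonal_symmetric_inverse(2)[OF Sigma_diag Sigma_pos])
  have G_eq: "G = (D ** U) ** (transpose V ** Dh ** H ** \<Sigma>')"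
    using factor_of_compact_svd[OF svd H_orth \<Sigma>_inv] by (simp add: D_def Dh_def matrix_mul_assoc)
  have "transpose (D ** (U ** transpose V) ** Dh) = H ** \<Sigma> ** transpose G"
    using svd by (simp add: D_def Dh_def matrix_transpose_mul \<Sigma>_sym matrix_mul_assoc)
  from factor_of_compact_svd[OF this G_orth \<Sigma>_inv]
  have H_eq: "H = (Dh ** V) ** (transpose U ** D ** G ** \<Sigma>')"
    by (simp add: D_def Dh_def matrix_transpose_mul matrix_mul_assoc)
  have G_rows: "norm (G $ j) \<le> \<pi> $ j / sqrt (c2 / (?p * ?r))" for j
  proof -
    have "norm (G $ j) \<le> \<pi> $ j * norm (U $ j) / sqrt (c2 / (?p * ?r))"
      using norm_row_diag_factor_le[OF G_eq[unfolded D_def] G_orth, of "c2 / (?p * ?r)" j]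
        eigU c2_pos pi_pos[of j]
      by simp
    also have "\<dots> \<le> \<pi> $ j / sqrt (c2 / (?p * ?r))"
      using norm_row_le_one_if_row_stochastic[OF U_nonneg U_rows, of j] pi_pos[of j] c2_pos
      by (intro divide_right_mono mult_left_le) auto
    finally show ?thesis .
  qed
  have "Dh ** Dh = diag_mat (\<chi> j. inverse (\<pi> $ j))"
    using pi_pos by (simp add: Dh_def diag_mat_mult_diag_mat less_imp_le flip: inverse_mult_distrib)
  then have H_rows: "norm (H $ j) \<le> inverse (sqrt (\<pi> $ j)) * norm (V $ j) / sqrt (c2 * ?r)" for j
    using norm_row_diag_factor_le[OF H_eq[unfolded Dh_def] H_orth, of "c2 * ?r" j] eigV c2_pos pi_pos[of j]
    by (simp add: Dh_def)
  have column_weights: "c2 / (?p * ?r) \<le> C1 / ?p * (\<pi> v* U) $ k" for k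
    using lambda_min_le_weighted_column_sum[OF U_nonneg U_rows, of \<pi> "C1 / ?p" k] eigU pi_bounds pi_pos
    by (simp add: less_imp_le)
  have V_rows: "norm (V $ j) \<le> C1 * ?r / c2 * \<pi> $ j" for j
  proof -
    have "c2 / (?p * ?r) * norm (V $ j) \<le> C1 / ?p * \<pi> $ j"
      using stat column_weights c2_pos unfolding stationary_dist_def
      by (intro norm_row_le_stationary[OF _ V_nonneg]) auto
    then show ?thesis
      using c2_pos by (simp add: field_simps)
  qed
  have c2_powr_half: "c2 powr (-1/2) = inverse (sqrt c2)"
    and c2_powr_three_halves: "c2 powr (-3/2) = inverse (c2 * sqrt c2)"
    using c2_pos powr_add[of c2 1 "1/2"] by (simp_all add: powr_minus powr_half_sqrt)
  show ?thesis
  proof (intro allI conjI)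
    fix j
    have "norm (axis j 1 v* G) \<le> \<pi> $ j / sqrt (c2 / (?p * ?r))"
      using G_rows by (simp add: axis_vector_matrix_mult)
    also have "\<dots> = c2 powr (-1/2) * \<pi> $ j * sqrt (?p * ?r)"
      unfolding c2_powr_half using c2_pos by (simp add: real_sqrt_divide field_simps)
    finally show "norm (axis j 1 v* G) \<le> c2 powr (-1/2) * \<pi> $ j * sqrt (?p * ?r)" .
  next
    fix j
    have "norm (axis j 1 v* H) \<le> inverse (sqrt (\<pi> $ j)) * (C1 * ?r / c2 * \<pi> $ j) / sqrt (c2 * ?r)"
      using H_rows[of j] V_rows[of j] pi_pos[of j] c2_pos unfolding axis_vector_matrix_mult
      by (elim order.trans) (intro divide_right_mono mult_left_mono, auto)
    also have "\<dots> = C1 * c2 powr (-3/2) * sqrt (\<pi> $ j * ?r)"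
      unfolding c2_powr_three_halves using c2_pos pi_pos[of j] by (simp add: real_sqrt_mult field_simps)
    finally show "norm (axis j 1 v* H) \<le> C1 * c2 powr (-3/2) * sqrt (\<pi> $ j * ?r)" .
  qed
qed

end
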